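(* Let $(G,\theta)$ be a $p$-oriented profinite group satisfying formal Hilbert 90. Then for every open subgroup $H\subset G$ and every $n\geq1$, the maps $Z^1(H,S[p^n])\to Z^1(H,S[p^{n-1}])$ and $H^1(H,S[p^n])\to H^1(H,S[p^{n-1}])$ induced by the $G$-module homomorphism $S[p^n]\to S[p^{n-1}]$, $x\mapsto px$, are surjective.
   Context: A $p$-oriented profinite group is a pair $(G,\theta)$ with $G$ profinite and $\theta\colon G\to\mathbb Z_p^\times$ a continuous homomorphism. $\mathbb Z/p^n\mathbb Z(1)$ is $\mathbb Z/p^n\mathbb Z$ with $g\cdot v=\theta(g)v$. $(G,\theta)$ satisfies formal Hilbert 90 if for every open subgroup $H\subset G$ and every $n\geq1$ the reduction map $H^1(H,\mathbb Z/p^n\mathbb Z(1))\to H^1(H,\mathbb Z/p\mathbb Z(1))$ is surjective. $S$ is the discrete $G$-module $\mathbb Q/\mathbb Z_{(p)}$ with $g$ acting by multiplication by $\theta(g)$; $S[p^n]$ is its $p^n$-torsion (isomorphic to $\mathbb Z/p^n\mathbb Z(1)$). $Z^1$ denotes continuous 1-cocycles. *)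

theory Defs
  imports "HOL-Analysis.Analysis" "HOL-Algebra.Group"
begin

definition topological_group :: "('g, 'b) monoid_scheme \<Rightarrow> 'g topology \<Rightarrow> bool" where
  "topological_group G T \<longleftrightarrow> group G \<and> topspace T = carrier G \<and>
     continuous_map (prod_topology T T) T (\<lambda>(x, y). x \<otimes>\<^bsub>G\<^esub> y) \<and>
     continuous_map T T (\<lambda>x. inv\<^bsub>G\<^esub> x)"

definition profinite_group :: "('g, 'b) monoid_scheme \<Rightarrow> 'g topology \<Rightarrow> bool" where
  "profinite_group G T \<longleftrightarrow> topological_group G T \<and> compact_space T \<and> Hausdorff_space T \<and>
     (\<forall>C \<in> connected_components_of T. \<exists>x. C = {x})"

definition open_subgroup :: "'g set \<Rightarrow> ('g, 'b) monoid_scheme \<Rightarrow> 'g topology \<Rightarrow> bool" where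
  "open_subgroup H G T \<longleftrightarrow> subgroup H G \<and> openin T H"

text \<open>A continuous homomorphism \<theta> : G \<rightarrow> \<int>_p^\<times>.  Since \<int>_p = lim \<int>/p^n\<int> (with the
inverse limit topology), \<theta> is given by its reductions \<theta> g n \<in> {0..<p^n} modulo p^n,
which must be compatible, each continuous into the discrete space \<int>/p^n\<int>,
multiplicative and with unit values.\<close>
definition p_orientation :: "nat \<Rightarrow> ('g, 'b) monoid_scheme \<Rightarrow> 'g topology \<Rightarrow> ('g \<Rightarrow> nat \<Rightarrow> int) \<Rightarrow> bool" where
  "p_orientation p G T \<theta> \<longleftrightarrow>
     (\<forall>g \<in> carrier G. \<forall>n. 0 \<le> \<theta> g n \<and> \<theta> g n < int p ^ n) \<and>
     (\<forall>g \<in> carrier G. \<forall>n. \<theta> g (Suc n) mod (int p ^ n) = \<theta> g n) \<and>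
     (\<forall>g \<in> carrier G. \<forall>n. coprime (\<theta> g n) (int p ^ n)) \<and>
     (\<forall>g \<in> carrier G. \<forall>h \<in> carrier G. \<forall>n.
         \<theta> (g \<otimes>\<^bsub>G\<^esub> h) n = (\<theta> g n * \<theta> h n) mod (int p ^ n)) \<and>
     (\<forall>n. continuous_map T (discrete_topology {0..<int p ^ n}) (\<lambda>g. \<theta> g n))"

text \<open>The module \<int>/p^n\<int>(1) (equivalently S[p^n] = p^{-n}\<int>_(p)/\<int>_(p), via a/p^n \<mapsto> a)
is modelled by the residues {0..<p^n}, with g acting as multiplication by \<theta>(g) mod p^n.\<close>
definition Z1 :: "nat \<Rightarrow> ('g, 'b) monoid_scheme \<Rightarrow> 'g topology \<Rightarrow> ('g \<Rightarrow> nat \<Rightarrow> int)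
                   \<Rightarrow> 'g set \<Rightarrow> nat \<Rightarrow> ('g \<Rightarrow> int) set" where
  "Z1 p G T \<theta> H n = {c.
      (\<forall>g \<in> H. 0 \<le> c g \<and> c g < int p ^ n) \<and> (\<forall>g. g \<notin> H \<longrightarrow> c g = 0) \<and>
      continuous_map (subtopology T H) (discrete_topology {0..<int p ^ n}) c \<and>
      (\<forall>g \<in> H. \<forall>h \<in> H. c (g \<otimes>\<^bsub>G\<^esub> h) = (c g + \<theta> g n * c h) mod (int p ^ n))}"

definition B1 :: "nat \<Rightarrow> ('g \<Rightarrow> nat \<Rightarrow> int) \<Rightarrow> 'g set \<Rightarrow> nat \<Rightarrow> ('g \<Rightarrow> int) set" where
  "B1 p \<theta> H n = {c. \<exists>a. (\<forall>g \<in> H. c g = (\<theta> g n * a - a) mod (int p ^ n)) \<and>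
                         (\<forall>g. g \<notin> H \<longrightarrow> c g = 0)}"

definition h1_class :: "nat \<Rightarrow> ('g, 'b) monoid_scheme \<Rightarrow> 'g topology \<Rightarrow> ('g \<Rightarrow> nat \<Rightarrow> int)
                   \<Rightarrow> 'g set \<Rightarrow> nat \<Rightarrow> ('g \<Rightarrow> int) \<Rightarrow> ('g \<Rightarrow> int) set" where
  "h1_class p G T \<theta> H n c = {c' \<in> Z1 p G T \<theta> H n.
      (\<lambda>g. (c' g - c g) mod (int p ^ n)) \<in> B1 p \<theta> H n}"

definition H1 :: "nat \<Rightarrow> ('g, 'b) monoid_scheme \<Rightarrow> 'g topology \<Rightarrow> ('g \<Rightarrow> nat \<Rightarrow> int)
                   \<Rightarrow> 'g set \<Rightarrow> nat \<Rightarrow> ('g \<Rightarrow> int) set set" where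
  "H1 p G T \<theta> H n = h1_class p G T \<theta> H n ` Z1 p G T \<theta> H n"

text \<open>Under the
identification S[p^n] = \<int>/p^n\<int>, multiplication by p : S[p^n] \<rightarrow> S[p^{n-1}] is
reduction modulo p^{n-1}; reduction \<int>/p^n\<int>(1) \<rightarrow> \<int>/p\<int>(1) is reduction mod p.\<close>
definition reduce :: "nat \<Rightarrow> nat \<Rightarrow> ('g \<Rightarrow> int) \<Rightarrow> ('g \<Rightarrow> int)" where
  "reduce p m c = (\<lambda>g. c g mod (int p ^ m))"

definition formal_hilbert90 :: "nat \<Rightarrow> ('g, 'b) monoid_scheme \<Rightarrow> 'g topology \<Rightarrow> ('g \<Rightarrow> nat \<Rightarrow> int) \<Rightarrow> bool" where
  "formal_hilbert90 p G T \<theta> \<longleftrightarrow>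
     (\<forall>H n. open_subgroup H G T \<and> n \<ge> 1 \<longrightarrow>
        h1_class p G T \<theta> H 1 ` reduce p 1 ` Z1 p G T \<theta> H n = H1 p G T \<theta> H 1)"

end

theory Submission
  imports Defs
begin

text \<open>
  Lifting a cocycle c modulo \<open>p^(n-1)\<close> to a cocycle modulo \<open>p^n\<close> amounts to finding a
  locally constant b with \<open>\<delta>c \<equiv> p^(n-1) \<delta>b (mod p^n)\<close>, i.e. to killing the obstruction
  \<open>w = \<delta>c / p^(n-1)\<close> modulo p by a coboundary. This is reached by repeatedly dividing by p:
  if a locally constant cochain f has \<open>\<delta>f \<equiv> 0 (mod p)\<close>, then f mod p is a cocycle with
  coefficients in \<open>\<int>/p\<int>(1)\<close>; by formal Hilbert 90 it is cohomologous to the reduction of a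
  cocycle z modulo \<open>p^n\<close>, so \<open>f = z + (\<theta>a - a) + p u\<close> and \<open>\<delta>f \<equiv> p \<delta>u (mod p^n)\<close>.
  Surjectivity on \<open>H\<^sup>1\<close> is then immediate, as \<open>H\<^sup>1\<close> consists of the classes of cocycles.
\<close>

lemma continuous_map_discrete_topology_iff:
  "continuous_map X (discrete_topology S) f \<longleftrightarrow>
     continuous_map X (discrete_topology UNIV) f \<and> f \<in> topspace X \<rightarrow> S"
  by (metis continuous_map_in_subtopology subtopology_discrete_topology inf_top_left)

lemma continuous_map_discrete_topology_combine:
  assumes "continuous_map X (discrete_topology UNIV) f"
    and "continuous_map X (discrete_topology UNIV) g"
  shows "continuous_map X (discrete_topology UNIV) (\<lambda>x. F (f x) (g x))"
proof -
  have "continuous_map X (discrete_topology UNIV) (\<lambda>x. (f x, g x))"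
    using continuous_map_pairedI[OF assms]
    by (simp add: prod_topology_discrete_topology[symmetric])
  then have "continuous_map X (discrete_topology UNIV) ((\<lambda>(a, b). F a b) \<circ> (\<lambda>x. (f x, g x)))"
    by (rule continuous_map_compose) simp
  then show ?thesis by (simp add: o_def)
qed

lemma continuous_map_discrete_topology_compose:
  "continuous_map X (discrete_topology UNIV) f \<Longrightarrow>
     continuous_map X (discrete_topology UNIV) (\<lambda>x. F (f x))"
  using continuous_map_discrete_topology_combine[of X f f "\<lambda>a b. F a"] by simp

lemma p_orientation_mod:
  assumes "p_orientation p G T \<theta>" "g \<in> carrier G" "k \<le> j"
  shows "\<theta> g j mod int p ^ k = \<theta> g k"
  using assms(3)
proof (induction j rule: dec_induct)
  case base
  then show ?case using assms(1,2) by (simp add: p_orientation_def)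
next
  case (step j)
  have "\<theta> g (Suc j) mod int p ^ k = \<theta> g (Suc j) mod int p ^ j mod int p ^ k"
    using step.hyps by (simp add: le_imp_power_dvd mod_mod_cancel)
  then show ?case using assms(1,2) step.IH by (simp add: p_orientation_def)
qed

lemma p_orientation_dvd_diff:
  "p_orientation p G T \<theta> \<Longrightarrow> g \<in> carrier G \<Longrightarrow> k \<le> j \<Longrightarrow> int p ^ k dvd \<theta> g j - \<theta> g k"
  using p_orientation_mod[of p G T \<theta> g k k] p_orientation_mod[of p G T \<theta> g k j]
  by (simp add: mod_eq_dvd_iff[symmetric])

lemma p_orientation_dvd_mult:
  "p_orientation p G T \<theta> \<Longrightarrow> g \<in> carrier G \<Longrightarrow> h \<in> carrier G \<Longrightarrow>
     int p ^ k dvd \<theta> g k * \<theta> h k - \<theta> (g \<otimes>\<^bsub>G\<^esub> h) k"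
  unfolding p_orientation_def by (simp add: mod_eq_dvd_iff[symmetric])

text \<open>The coboundary of a 1-cochain for the action \<open>g \<cdot> x = t g * x\<close>, computed in \<open>\<int>\<close>
  without reduction, so that congruences modulo different powers of p can be compared.\<close>

definition coboundary1 :: "('g, 'b) monoid_scheme \<Rightarrow> ('g \<Rightarrow> int) \<Rightarrow> ('g \<Rightarrow> int) \<Rightarrow> 'g \<Rightarrow> 'g \<Rightarrow> int"
  where "coboundary1 G t f g h = f g + t g * f h - f (g \<otimes>\<^bsub>G\<^esub> h)"

locale p_oriented_subgroup =
  fixes p :: nat and G :: "('g, 'b) monoid_scheme" and T :: "'g topology"
    and \<theta> :: "'g \<Rightarrow> nat \<Rightarrow> int" and H :: "'g set"
  assumes p_pos: "0 < p"
    and orientation: "p_orientation p G T \<theta>"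
    and subgroup: "subgroup H G"
begin

abbreviation locally_constant :: "('g \<Rightarrow> 'a) \<Rightarrow> bool"
  where "locally_constant f \<equiv> continuous_map (subtopology T H) (discrete_topology UNIV) f"

lemma subset_carrier: "g \<in> H \<Longrightarrow> g \<in> carrier G"
  using subgroup.subset[OF subgroup] by blast

lemma locally_constant_orientation: "locally_constant (\<lambda>g. \<theta> g k)"
proof -
  have "continuous_map T (discrete_topology {0..<int p ^ k}) (\<lambda>g. \<theta> g k)"
    using orientation unfolding p_orientation_def by blast
  then show ?thesis
    using continuous_map_discrete_topology_iff continuous_map_from_subtopology by blast
qed

lemma locally_constant_Z1: "z \<in> Z1 p G T \<theta> H k \<Longrightarrow> locally_constant z"
  unfolding Z1_def using continuous_map_discrete_topology_iff by blast

lemma Z1_coboundary1_dvd: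
  assumes "z \<in> Z1 p G T \<theta> H k" "k \<le> j" "g \<in> H" "h \<in> H"
  shows "int p ^ k dvd coboundary1 G (\<lambda>g. \<theta> g j) z g h"
proof -
  have "z (g \<otimes>\<^bsub>G\<^esub> h) = (z g + \<theta> g k * z h) mod int p ^ k"
    using assms unfolding Z1_def by blast
  then have "int p ^ k dvd coboundary1 G (\<lambda>g. \<theta> g k) z g h"
    unfolding coboundary1_def by (simp add: mod_eq_dvd_iff[symmetric])
  moreover have "int p ^ k dvd (\<theta> g j - \<theta> g k) * z h"
    using p_orientation_dvd_diff[OF orientation subset_carrier] assms(2,3) by simp
  moreover have "coboundary1 G (\<lambda>g. \<theta> g j) z g h
      = coboundary1 G (\<lambda>g. \<theta> g k) z g h + (\<theta> g j - \<theta> g k) * z h"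
    unfolding coboundary1_def by (simp add: algebra_simps)
  ultimately show ?thesis by (simp only: dvd_add)
qed

lemma Z1_mod_restrictI:
  assumes "locally_constant f" "k \<le> j"
    and "\<forall>g\<in>H. \<forall>h\<in>H. int p ^ k dvd coboundary1 G (\<lambda>g. \<theta> g j) f g h"
  shows "(\<lambda>g. if g \<in> H then f g mod int p ^ k else 0) \<in> Z1 p G T \<theta> H k"
    (is "?c \<in> _")
proof -
  have range: "0 \<le> f g mod int p ^ k \<and> f g mod int p ^ k < int p ^ k" for g
    using p_pos by simp
  have "locally_constant (\<lambda>g. f g mod int p ^ k)"
    using continuous_map_discrete_topology_compose[OF assms(1)] .
  then have "locally_constant ?c"
    by (rule continuous_map_eq) simp
  then have continuous: "continuous_map (subtopology T H) (discrete_topology {0..<int p ^ k}) ?c"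
    using range by (simp add: continuous_map_discrete_topology_iff[of _ "{0..<int p ^ k}"] Pi_iff)
  have "?c (g \<otimes>\<^bsub>G\<^esub> h) = (?c g + \<theta> g k * ?c h) mod int p ^ k" if "g \<in> H" "h \<in> H" for g h
  proof -
    have "int p ^ k dvd coboundary1 G (\<lambda>g. \<theta> g j) f g h" "int p ^ k dvd (\<theta> g j - \<theta> g k) * f h"
      using assms(2,3) p_orientation_dvd_diff[OF orientation subset_carrier] that by auto
    moreover have "(f g + \<theta> g k * f h) - f (g \<otimes>\<^bsub>G\<^esub> h)
        = coboundary1 G (\<lambda>g. \<theta> g j) f g h - (\<theta> g j - \<theta> g k) * f h"
      unfolding coboundary1_def by (simp add: algebra_simps)
    ultimately have "int p ^ k dvd (f g + \<theta> g k * f h) - f (g \<otimes>\<^bsub>G\<^esub> h)"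
      by (simp only: dvd_diff)
    then have "f (g \<otimes>\<^bsub>G\<^esub> h) mod int p ^ k = (f g + \<theta> g k * f h) mod int p ^ k"
      by (simp only: mod_eq_dvd_iff dvd_diff_commute)
    also have "\<dots> = (f g mod int p ^ k + \<theta> g k * (f h mod int p ^ k)) mod int p ^ k"
      by (metis mod_add_left_eq mod_add_right_eq mod_mult_right_eq)
    finally show ?thesis using that subgroup.m_closed[OF subgroup] by simp
  qed
  then show ?thesis
    unfolding Z1_def using range continuous by auto
qed

lemma reduce_in_Z1:
  assumes "d \<in> Z1 p G T \<theta> H n" "m \<le> n"
  shows "reduce p m d \<in> Z1 p G T \<theta> H m"
proof -
  have "reduce p m d = (\<lambda>g. if g \<in> H then d g mod int p ^ m else 0)"
    using assms(1) unfolding reduce_def Z1_def by auto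
  moreover have "int p ^ m dvd coboundary1 G (\<lambda>g. \<theta> g n) d g h" if "g \<in> H" "h \<in> H" for g h
    using Z1_coboundary1_dvd[OF assms(1) order.refl that] le_imp_power_dvd[OF assms(2)]
    by (rule dvd_trans[rotated])
  ultimately show ?thesis
    using Z1_mod_restrictI[OF locally_constant_Z1[OF assms(1)] assms(2)] by simp
qed

lemma h1_class_eqD:
  assumes "c \<in> Z1 p G T \<theta> H k" "h1_class p G T \<theta> H k c = h1_class p G T \<theta> H k c'"
  obtains a where "\<forall>g\<in>H. (c g - c' g) mod int p ^ k = (\<theta> g k * a - a) mod int p ^ k"
proof -
  have "(\<lambda>g. (c g - c g) mod int p ^ k) \<in> B1 p \<theta> H k"
    using assms(1) unfolding B1_def Z1_def by (auto intro: exI[of _ 0])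
  then have "c \<in> h1_class p G T \<theta> H k c'"
    using assms unfolding h1_class_def by blast
  then show ?thesis
    using that unfolding h1_class_def B1_def by auto
qed

end

locale hilbert90_subgroup = p_oriented_subgroup +
  fixes n :: nat
  assumes n_pos: "1 \<le> n"
    and hilbert90: "h1_class p G T \<theta> H 1 ` reduce p 1 ` Z1 p G T \<theta> H n = H1 p G T \<theta> H 1"
begin

abbreviation \<delta>
  where "\<delta> \<equiv> coboundary1 G (\<lambda>g. \<theta> g n)"

lemma hilbert90_divide_by_p:
  assumes f: "locally_constant f" and dvd: "\<forall>g\<in>H. \<forall>h\<in>H. int p dvd \<delta> f g h"
  obtains u where "locally_constant u"
    and "\<forall>g\<in>H. \<forall>h\<in>H. int p ^ n dvd \<delta> f g h - int p * \<delta> u g h"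
proof -
  define f1 where "f1 = (\<lambda>g. if g \<in> H then f g mod int p ^ 1 else 0)"
  have "f1 \<in> Z1 p G T \<theta> H 1"
    unfolding f1_def using Z1_mod_restrictI[OF f n_pos] dvd by simp
  then have "h1_class p G T \<theta> H 1 f1 \<in> h1_class p G T \<theta> H 1 ` reduce p 1 ` Z1 p G T \<theta> H n"
    unfolding hilbert90 H1_def by blast
  then obtain z where z: "z \<in> Z1 p G T \<theta> H n"
    and "h1_class p G T \<theta> H 1 f1 = h1_class p G T \<theta> H 1 (reduce p 1 z)"
    by blast
  then obtain a
    where a: "\<forall>g\<in>H. (f1 g - reduce p 1 z g) mod int p ^ 1 = (\<theta> g 1 * a - a) mod int p ^ 1"
    using h1_class_eqD \<open>f1 \<in> Z1 p G T \<theta> H 1\<close> by blast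
  have p_dvd: "int p dvd f g - z g - (\<theta> g n * a - a)" if "g \<in> H" for g
  proof -
    have "(f g - z g) mod int p = (\<theta> g 1 * a - a) mod int p"
      using a that unfolding f1_def reduce_def by (simp add: mod_diff_eq)
    then have "int p dvd f g - z g - (\<theta> g 1 * a - a)"
      by (simp add: mod_eq_dvd_iff)
    moreover have "int p dvd (\<theta> g n - \<theta> g 1) * a"
      using p_orientation_dvd_diff[OF orientation subset_carrier[OF that] n_pos] by simp
    moreover have "f g - z g - (\<theta> g n * a - a)
        = (f g - z g - (\<theta> g 1 * a - a)) - (\<theta> g n - \<theta> g 1) * a"
      by (simp add: algebra_simps)
    ultimately show ?thesis by (simp only: dvd_diff)
  qed
  define u where "u g = (f g - z g - (\<theta> g n * a - a)) div int p" for g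
  have pu: "int p * u g = f g - z g - (\<theta> g n * a - a)" if "g \<in> H" for g
    using p_dvd[OF that] unfolding u_def by simp
  have "locally_constant (\<lambda>g. f g - z g)"
    using continuous_map_discrete_topology_combine[OF f locally_constant_Z1[OF z]] .
  from continuous_map_discrete_topology_combine[OF this locally_constant_orientation,
      of "\<lambda>x t. (x - (t * a - a)) div int p"]
  have "locally_constant u"
    unfolding u_def by simp
  moreover have "int p ^ n dvd \<delta> f g h - int p * \<delta> u g h" if g: "g \<in> H" and h: "h \<in> H" for g h
  proof -
    have gh: "g \<otimes>\<^bsub>G\<^esub> h \<in> H" using subgroup.m_closed[OF subgroup g h] .
    have "int p * \<delta> u g h = int p * u g + \<theta> g n * (int p * u h) - int p * u (g \<otimes>\<^bsub>G\<^esub> h)"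
      unfolding coboundary1_def by (simp add: algebra_simps)
    also have "\<dots> = \<delta> f g h - \<delta> z g h - (\<theta> g n * \<theta> h n - \<theta> (g \<otimes>\<^bsub>G\<^esub> h) n) * a"
      unfolding pu[OF g] pu[OF h] pu[OF gh] coboundary1_def by (simp add: algebra_simps)
    finally have eq: "\<delta> f g h - int p * \<delta> u g h
        = \<delta> z g h + (\<theta> g n * \<theta> h n - \<theta> (g \<otimes>\<^bsub>G\<^esub> h) n) * a"
      by simp
    have "int p ^ n dvd \<delta> z g h"
      using Z1_coboundary1_dvd[OF z order.refl g h] .
    moreover have "int p ^ n dvd \<theta> g n * \<theta> h n - \<theta> (g \<otimes>\<^bsub>G\<^esub> h) n"
      using p_orientation_dvd_mult[OF orientation subset_carrier[OF g] subset_carrier[OF h]] .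
    ultimately show ?thesis
      unfolding eq by (intro dvd_add dvd_mult2)
  qed
  ultimately show ?thesis using that by blast
qed

lemma coboundary1_descent:
  assumes "j + 1 \<le> n" "locally_constant f"
    and "\<forall>g\<in>H. \<forall>h\<in>H. int p ^ (j + 1) dvd int p ^ j * w g h - \<delta> f g h"
  obtains b where "locally_constant b" "\<forall>g\<in>H. \<forall>h\<in>H. int p dvd w g h - \<delta> b g h"
  using assms
proof (induction j arbitrary: f)
  case 0
  then show ?case by auto
next
  case (Suc j)
  have "int p dvd \<delta> f g h" if "g \<in> H" "h \<in> H" for g h
  proof -
    have "int p dvd int p ^ (Suc j + 1)" by simp
    then have "int p dvd int p ^ Suc j * w g h - \<delta> f g h"
      using Suc.prems(4) that by (blast intro: dvd_trans)
    moreover have "int p dvd int p ^ Suc j * w g h" by simp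
    moreover have "\<delta> f g h = int p ^ Suc j * w g h - (int p ^ Suc j * w g h - \<delta> f g h)"
      by simp
    ultimately show ?thesis by (metis dvd_diff)
  qed
  then obtain u where u: "locally_constant u"
    and pu: "\<forall>g\<in>H. \<forall>h\<in>H. int p ^ n dvd \<delta> f g h - int p * \<delta> u g h"
    using hilbert90_divide_by_p Suc.prems(3) by blast
  have "int p ^ (j + 1) dvd int p ^ j * w g h - \<delta> u g h" if "g \<in> H" "h \<in> H" for g h
  proof -
    have "int p ^ (Suc j + 1) dvd int p ^ n"
      using Suc.prems(2) by (rule le_imp_power_dvd)
    then have "int p ^ (Suc j + 1) dvd \<delta> f g h - int p * \<delta> u g h"
      using pu that dvd_trans by blast
    moreover have "int p ^ (Suc j + 1) dvd int p ^ Suc j * w g h - \<delta> f g h"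
      using Suc.prems(4) that by blast
    ultimately have "int p ^ (Suc j + 1)
        dvd (int p ^ Suc j * w g h - \<delta> f g h) + (\<delta> f g h - int p * \<delta> u g h)"
      by (rule dvd_add[rotated])
    then have "int p * int p ^ (j + 1) dvd int p * (int p ^ j * w g h - \<delta> u g h)"
      by (simp add: algebra_simps)
    then show ?thesis using p_pos by simp
  qed
  then show ?case
    using Suc.IH[OF Suc.prems(1) _ u] Suc.prems(2) by simp
qed

lemma Z1_lift:
  assumes c: "c \<in> Z1 p G T \<theta> H (n - 1)"
  obtains d where "d \<in> Z1 p G T \<theta> H n" "reduce p (n - 1) d = c"
proof -
  define m where "m = n - 1"
  have n: "n = m + 1" using n_pos unfolding m_def by simp
  define w where "w g h = \<delta> c g h div int p ^ m" for g h
  have pw: "int p ^ m * w g h = \<delta> c g h" if "g \<in> H" "h \<in> H" for g h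
    using Z1_coboundary1_dvd[OF c _ that] unfolding w_def m_def by simp
  obtain b where b: "locally_constant b" "\<forall>g\<in>H. \<forall>h\<in>H. int p dvd w g h - \<delta> b g h"
    using coboundary1_descent[of m c w] locally_constant_Z1[OF c] pw n unfolding m_def by auto
  define d where "d = (\<lambda>g. if g \<in> H then (c g - int p ^ m * b g) mod int p ^ n else 0)"
  have "int p ^ n dvd \<delta> (\<lambda>g. c g - int p ^ m * b g) g h" if "g \<in> H" "h \<in> H" for g h
  proof -
    have "\<delta> (\<lambda>g. c g - int p ^ m * b g) g h = int p ^ m * (w g h - \<delta> b g h)"
      using pw[OF that] unfolding coboundary1_def by (simp add: algebra_simps)
    then show ?thesis
      using b(2) that n by (simp add: mult_dvd_mono)
  qed
  moreover have "locally_constant (\<lambda>g. c g - int p ^ m * b g)"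
    using continuous_map_discrete_topology_combine[OF locally_constant_Z1[OF c] b(1)]
    unfolding m_def .
  ultimately have "d \<in> Z1 p G T \<theta> H n"
    unfolding d_def using Z1_mod_restrictI[of _ n n] by blast
  moreover have "reduce p m d = c"
  proof
    fix g
    show "reduce p m d g = c g"
    proof (cases "g \<in> H")
      case True
      have "int p ^ m dvd int p ^ n" using n by (simp add: le_imp_power_dvd)
      then have "reduce p m d g = (c g + (- b g) * int p ^ m) mod int p ^ m"
        using True unfolding reduce_def d_def by (simp add: mod_mod_cancel mult.commute)
      also have "\<dots> = c g mod int p ^ m"
        by (rule mod_mult_self1)
      also have "\<dots> = c g"
        using c True unfolding Z1_def m_def by simp
      finally show ?thesis .
    next
      case False
      then show ?thesis using c unfolding reduce_def d_def Z1_def by simp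
    qed
  qed
  ultimately show ?thesis using that unfolding m_def by blast
qed

end

theorem lemma2p3:
  fixes p :: nat and G :: "('g, 'b) monoid_scheme" and T :: "'g topology"
    and \<theta> :: "'g \<Rightarrow> nat \<Rightarrow> int"
  assumes "prime p"
    and "profinite_group G T"
    and "p_orientation p G T \<theta>"
    and "formal_hilbert90 p G T \<theta>"
  shows "\<forall>H n. open_subgroup H G T \<and> n \<ge> 1 \<longrightarrow>
           reduce p (n - 1) ` Z1 p G T \<theta> H n = Z1 p G T \<theta> H (n - 1) \<and>
           h1_class p G T \<theta> H (n - 1) ` reduce p (n - 1) ` Z1 p G T \<theta> H n
             = H1 p G T \<theta> H (n - 1)"
proof (intro allI impI)
  fix H and n :: nat
  assume H: "open_subgroup H G T \<and> n \<ge> 1"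
  interpret hilbert90_subgroup p G T \<theta> H n
    using assms(1,3,4) H prime_gt_0_nat
    unfolding hilbert90_subgroup_def hilbert90_subgroup_axioms_def p_oriented_subgroup_def
      formal_hilbert90_def open_subgroup_def
    by blast
  have "reduce p (n - 1) ` Z1 p G T \<theta> H n = Z1 p G T \<theta> H (n - 1)"
  proof
    show "reduce p (n - 1) ` Z1 p G T \<theta> H n \<subseteq> Z1 p G T \<theta> H (n - 1)"
      using reduce_in_Z1[of _ n "n - 1"] by auto
    show "Z1 p G T \<theta> H (n - 1) \<subseteq> reduce p (n - 1) ` Z1 p G T \<theta> H n"
      by (metis Z1_lift image_eqI subsetI)
  qed
  then show "reduce p (n - 1) ` Z1 p G T \<theta> H n = Z1 p G T \<theta> H (n - 1) \<and>
      h1_class p G T \<theta> H (n - 1) ` reduce p (n - 1) ` Z1 p G T \<theta> H n = H1 p G T \<theta> H (n - 1)"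
    unfolding H1_def by simp
qed

end
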